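(* Let $\mathcal{V},\bar{\mathcal{V}}$ be disjoint finite sets with $|\mathcal{V}|=N$, $|\bar{\mathcal{V}}|=M$, and let $G:2^{\mathcal{V}\cup\bar{\mathcal{V}}}\to\mathbb{R}$ be a submodular, nonnegative set function with $G(\emptyset)=0$ and $G(\mathcal{V}\cup\bar{\mathcal{V}})=0$, with Lovász extension $g(\mathbf{x},\bar{\mathbf{x}})$. Define $F:2^{\mathcal{V}}\to\mathbb{R}$ by $F(\mathcal{S})=\min_{\mathcal{T}\subseteq\bar{\mathcal{V}}}G(\mathcal{S}\cup\mathcal{T})-\min_{\mathcal{T}\subseteq\bar{\mathcal{V}}}G(\mathcal{T})$. Then the Lovász extension $f$ of $F$ satisfies $f(\mathbf{x})=\min_{\bar{\mathbf{x}}\in\mathbb{R}^M}g(\mathbf{x},\bar{\mathbf{x}})$ for all $\mathbf{x}\in\mathbb{R}^N$.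
   Context: Lovász extension: for a set function $F:2^{[n]}\to\mathbb{R}$ with $F(\emptyset)=0$, and $\mathbf{x}\in\mathbb{R}^n$ with entries sorted as $x_{i_1}\ge\cdots\ge x_{i_n}$, $f(\mathbf{x})=\sum_{j=1}^{n-1}F(\{i_1,\dots,i_j\})(x_{i_j}-x_{i_{j+1}})+F([n])x_{i_n}$. In $g(\mathbf{x},\bar{\mathbf{x}})$, $\mathbf{x}\in\mathbb{R}^N$ is indexed by $\mathcal{V}$ and $\bar{\mathbf{x}}\in\mathbb{R}^M$ by $\bar{\mathcal{V}}$. Submodularity: $F(\mathcal{S}_1)+F(\mathcal{S}_2)\ge F(\mathcal{S}_1\cup\mathcal{S}_2)+F(\mathcal{S}_1\cap\mathcal{S}_2)$. *)

theory Defs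
  imports Main Complex_Main
begin

text \<open>Lovasz extension of a set function F on the finite ground set U, evaluated at a
vector x indexed by U (values of x outside U are irrelevant).\<close>

definition lovasz :: "'a set \<Rightarrow> ('a set \<Rightarrow> real) \<Rightarrow> ('a \<Rightarrow> real) \<Rightarrow> real" where
  "lovasz U F x =
    (let n = card U;
         s = (SOME s. bij_betw s {1..n} U \<and>
                (\<forall>i j. 1 \<le> i \<longrightarrow> i \<le> j \<longrightarrow> j \<le> n \<longrightarrow> x (s j) \<le> x (s i)))
     in (\<Sum>j=1..<n. F (s ` {1..j}) * (x (s j) - x (s (Suc j)))) + F U * x (s n))"

definition submodular_on :: "'a set \<Rightarrow> ('a set \<Rightarrow> real) \<Rightarrow> bool" where
  "submodular_on U G \<longleftrightarrow>
    (\<forall>S1 S2. S1 \<subseteq> U \<longrightarrow> S2 \<subseteq> U \<longrightarrow> G S1 + G S2 \<ge> G (S1 \<union> S2) + G (S1 \<inter> S2))"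

end

theory Submission
  imports Defs "HOL-Analysis.Analysis"
begin

text \<open>The Lov\'asz extension of a set function \<open>H\<close> with \<open>H {} = H U = 0\<close> is the integral
  over \<open>t\<close> of \<open>H\<close> evaluated at the superlevel sets \<open>{u. t \<le> x u}\<close>. Since
  \<open>min G = G {} = 0\<close>, \<open>F S = min\<^sub>T G (S \<union> T)\<close>, and comparing superlevel sets pointwise gives
  \<open>f x \<le> g (x, xb)\<close> for every \<open>xb\<close>. For equality, submodularity makes the largest minimizer
  \<open>T(S)\<close> of \<open>T \<mapsto> G (S \<union> T)\<close> monotone in \<open>S\<close>; a monotone family is realized by the
  superlevel sets of a suitable \<open>xb\<close>, and then every superlevel set of \<open>(x, xb)\<close> is
  \<open>S \<union> T(S)\<close> for a superlevel set \<open>S\<close> of \<open>x\<close>, on which \<open>G\<close> takes the value \<open>F S\<close>.\<close>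

lemma exists_decreasing_enumeration:
  fixes z :: "'a \<Rightarrow> real"
  assumes "finite U"
  shows "\<exists>s. bij_betw s {1..card U} U \<and>
           (\<forall>i j. 1 \<le> i \<longrightarrow> i \<le> j \<longrightarrow> j \<le> card U \<longrightarrow> z (s j) \<le> z (s i))"
proof -
  obtain xs where xs: "set xs = U" "distinct xs" using finite_distinct_list[OF assms] by blast
  define ys where "ys = sort_key (\<lambda>u. - z u) xs"
  have ys: "set ys = U" "distinct ys" using xs by (auto simp: ys_def)
  have len: "length ys = card U" using ys distinct_card by fastforce
  have sorted: "sorted (map (\<lambda>u. - z u) ys)" by (simp add: ys_def)
  define s where "s i = ys ! (i - 1)" for i
  have "bij_betw s {1..card U} U"
  proof (rule bij_betw_imageI)
    show "inj_on s {1..card U}"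
      unfolding inj_on_def s_def using ys(2) len by (auto simp: nth_eq_iff_index_eq)
    have "s ` {1..card U} = (!) ys ` {..<length ys}"
      using len by (force simp: s_def image_iff Bex_def intro: exI[of _ "Suc _"])
    then show "s ` {1..card U} = U"
      using ys(1) unfolding set_conv_nth by auto
  qed
  moreover have "z (s j) \<le> z (s i)" if "1 \<le> i" "i \<le> j" "j \<le> card U" for i j
  proof -
    have "map (\<lambda>u. - z u) ys ! (i-1) \<le> map (\<lambda>u. - z u) ys ! (j-1)"
      using sorted that len by (intro sorted_nth_mono) auto
    then show ?thesis using that len by (simp add: s_def)
  qed
  ultimately show ?thesis by blast
qed

lemma lovasz_eq_sorted_sum:
  fixes z :: "'a \<Rightarrow> real"
  assumes "finite U"
  obtains s where "bij_betw s {1..card U} U"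
    and "\<And>i j. 1 \<le> i \<Longrightarrow> i \<le> j \<Longrightarrow> j \<le> card U \<Longrightarrow> z (s j) \<le> z (s i)"
    and "lovasz U H z = (\<Sum>j=1..<card U. H (s ` {1..j}) * (z (s j) - z (s (Suc j))))
                        + H U * z (s (card U))"
proof -
  let ?P = "\<lambda>s. bij_betw s {1..card U} U \<and>
              (\<forall>i j. 1 \<le> i \<longrightarrow> i \<le> j \<longrightarrow> j \<le> card U \<longrightarrow> z (s j) \<le> z (s i))"
  have "?P (SOME s. ?P s)"
    using exists_decreasing_enumeration[OF assms] by (rule someI_ex)
  with that show ?thesis unfolding lovasz_def Let_def by blast
qed

text \<open>With the conventions \<open>z (s 0) = +\<infinity>\<close> and \<open>z (s (n+1)) = -\<infinity>\<close>, the superlevel set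
  at any \<open>t \<in> (z (s (k+1)), z (s k)]\<close> consists of the first \<open>k\<close> elements.\<close>

lemma superlevel_set_decreasing_enumeration:
  fixes z :: "'a \<Rightarrow> real"
  assumes bij: "bij_betw s {1..n} U"
    and mono: "\<And>i j. 1 \<le> i \<Longrightarrow> i \<le> j \<Longrightarrow> j \<le> n \<Longrightarrow> z (s j) \<le> z (s i)"
    and "k \<le> n"
    and above: "k < n \<Longrightarrow> z (s (Suc k)) < t" and below: "1 \<le> k \<Longrightarrow> t \<le> z (s k)"
  shows "{u\<in>U. t \<le> z u} = s ` {1..k}"
proof (intro equalityI subsetI)
  fix u assume "u \<in> {u\<in>U. t \<le> z u}"
  then obtain i where i: "i \<in> {1..n}" "u = s i" "t \<le> z (s i)"
    using bij by (auto simp: bij_betw_def)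
  have "i \<le> k"
  proof (rule ccontr)
    assume "\<not> i \<le> k"
    then have "z (s i) \<le> z (s (Suc k))" using mono[of "Suc k" i] i by auto
    then show False using i above \<open>\<not> i \<le> k\<close> \<open>k \<le> n\<close> by auto
  qed
  then show "u \<in> s ` {1..k}" using i by auto
next
  fix u assume "u \<in> s ` {1..k}"
  then obtain i where i: "i \<in> {1..k}" "u = s i" by blast
  then have "t \<le> z u" using mono[of i k] below \<open>k \<le> n\<close> by fastforce
  moreover have "u \<in> U" using i \<open>k \<le> n\<close> bij by (auto simp: bij_betw_def)
  ultimately show "u \<in> {u\<in>U. t \<le> z u}" by simp
qed

text \<open>\<open>H U = H {} = 0\<close> makes the integrand vanish outside the range of \<open>z\<close>, so any
  interval containing that range will do.\<close>

lemma lovasz_has_integral: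
  fixes H :: "'a set \<Rightarrow> real" and z :: "'a \<Rightarrow> real"
  assumes fin: "finite U" and HU: "H U = 0" and H0: "H {} = 0"
    and range: "\<And>u. u \<in> U \<Longrightarrow> a \<le> z u \<and> z u \<le> b"
  shows "((\<lambda>t. H {u\<in>U. t \<le> z u}) has_integral lovasz U H z) {a..b}"
proof (cases "U = {}")
  case True
  then show ?thesis using H0 by (simp add: lovasz_def)
next
  case False
  define n where "n = card U"
  have n: "1 \<le> n" using False fin by (simp add: n_def Suc_le_eq card_gt_0_iff)
  obtain s where bij: "bij_betw s {1..n} U"
    and mono: "\<And>i j. 1 \<le> i \<Longrightarrow> i \<le> j \<Longrightarrow> j \<le> n \<Longrightarrow> z (s j) \<le> z (s i)"
    and L: "lovasz U H z = (\<Sum>j=1..<n. H (s ` {1..j}) * (z (s j) - z (s (Suc j))))"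
    using lovasz_eq_sorted_sum[OF fin, of z H] HU unfolding n_def by auto
  define h where "h t = H {u\<in>U. t \<le> z u}" for t
  have level: "h t = H (s ` {1..k})"
    if "k \<le> n" "k < n \<Longrightarrow> z (s (Suc k)) < t" "1 \<le> k \<Longrightarrow> t \<le> z (s k)" for k t
    unfolding h_def using superlevel_set_decreasing_enumeration[OF bij mono that] by simp
  have sU: "s 1 \<in> U" "s n \<in> U" using bij n by (auto simp: bij_betw_def)
  have piece: "(h has_integral H (s ` {1..k}) * (z (s k) - z (s (Suc k)))) {z (s (Suc k))..z (s k)}"
    if "1 \<le> k" "k < n" for k
  proof -
    have "((\<lambda>t. H (s ` {1..k})) has_integral H (s ` {1..k}) * (z (s k) - z (s (Suc k))))
            {z (s (Suc k))..z (s k)}"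
      using has_integral_const_real[of "H (s ` {1..k})" "z (s (Suc k))" "z (s k)"] mono[of k "Suc k"] that
      by (simp add: mult.commute)
    then show ?thesis
      by (rule has_integral_spike_finite[where S="{z (s (Suc k))}", rotated -1])
        (use level that in auto)
  qed
  have middle: "(h has_integral (\<Sum>j=1..<k. H (s ` {1..j}) * (z (s j) - z (s (Suc j)))))
                  {z (s k)..z (s 1)}" if "1 \<le> k" "k \<le> n" for k
    using that
  proof (induction k rule: dec_induct)
    case base
    show ?case using has_integral_refl(2)[of h "z (s 1)"] by simp
  next
    case (step k)
    have "z (s (Suc k)) \<le> z (s k)" "z (s k) \<le> z (s 1)" using mono step by auto
    from has_integral_combine[OF this piece step.IH] step show ?case
      by (simp add: add.commute)
  qed
  have "(h has_integral 0) {a..z (s n)}"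
    using level[of n] HU bij by (intro has_integral_eq[OF _ has_integral_0])
      (auto simp: bij_betw_def)
  moreover have "(h has_integral 0) {z (s 1)..b}"
    using level[of 0] H0
    by (intro has_integral_spike_finite[where S="{z (s 1)}", OF _ _ has_integral_0]) auto
  ultimately have "(h has_integral 0 + lovasz U H z + 0) {a..b}"
    using middle[OF n order.refl] L range sU mono[of 1 n] n
    by (intro has_integral_combine[of _ "z (s 1)"] has_integral_combine[of _ "z (s n)"]) auto
  then show ?thesis by (simp add: h_def[abs_def])
qed

lemma lovasz_le_lovasz_superlevel:
  fixes H K :: "'a set \<Rightarrow> real" and y z :: "'a \<Rightarrow> real"
  assumes "finite U" "H U = 0" "H {} = 0"
    and "finite W" "K W = 0" "K {} = 0"
    and "\<And>t. H {u\<in>U. t \<le> y u} \<le> K {w\<in>W. t \<le> z w}"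
  shows "lovasz U H y \<le> lovasz W K z"
proof -
  define A where "A = (\<Sum>u\<in>U. \<bar>y u\<bar>) + (\<Sum>w\<in>W. \<bar>z w\<bar>)"
  have "\<bar>y u\<bar> \<le> A" if "u \<in> U" for u
    using member_le_sum[of u U "\<lambda>u. \<bar>y u\<bar>"] that \<open>finite U\<close>
    by (simp add: A_def add_increasing2 sum_nonneg)
  moreover have "\<bar>z w\<bar> \<le> A" if "w \<in> W" for w
    using member_le_sum[of w W "\<lambda>w. \<bar>z w\<bar>"] that \<open>finite W\<close>
    by (simp add: A_def add_increasing sum_nonneg)
  ultimately show ?thesis
    using assms
    by (intro has_integral_le[OF lovasz_has_integral[where a="-A" and b=A]
                                 lovasz_has_integral[where a="-A" and b=A]])
       (fastforce simp: abs_le_iff)+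
qed

lemma lovasz_eq_lovasz_superlevel:
  fixes H K :: "'a set \<Rightarrow> real" and y z :: "'a \<Rightarrow> real"
  assumes "finite U" "H U = 0" "H {} = 0"
    and "finite W" "K W = 0" "K {} = 0"
    and "\<And>t. H {u\<in>U. t \<le> y u} = K {w\<in>W. t \<le> z w}"
  shows "lovasz U H y = lovasz W K z"
  using lovasz_le_lovasz_superlevel[of U H W K y z] lovasz_le_lovasz_superlevel[of W K U H z y]
    assms by (simp add: order_antisym)

text \<open>The witness gives \<open>b\<close> the largest value \<open>x u\<close> for which \<open>b\<close> already lies in
  the set attached to the superlevel set \<open>{v. x u \<le> x v}\<close>; monotonicity of \<open>T\<close> makes
  this threshold exact.\<close>

lemma exists_superlevel_realization:
  fixes x :: "'a \<Rightarrow> real" and T :: "'a set \<Rightarrow> 'b set"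
  assumes "finite V" "V \<noteq> {}"
    and mono: "\<And>S S'. S \<subseteq> S' \<Longrightarrow> S' \<subseteq> V \<Longrightarrow> T S \<subseteq> T S'"
    and range: "\<And>S. T S \<subseteq> W" and full: "T V = W"
  shows "\<exists>xb. \<forall>t. {b\<in>W. t \<le> xb b} = (if \<exists>u\<in>V. t \<le> x u then T {u\<in>V. t \<le> x u} else {})"
proof -
  define Sx where "Sx t = {u\<in>V. t \<le> x u}" for t
  define Q where "Q b = {x u | u. u \<in> V \<and> b \<in> T (Sx (x u))}" for b
  define xb where "xb b = Max (Q b)" for b
  have "Min (x ` V) \<in> x ` V" using assms(1,2) by simp
  then obtain u0 where u0: "u0 \<in> V" "x u0 = Min (x ` V)" by auto
  then have "Sx (x u0) = V" using \<open>finite V\<close> by (auto simp: Sx_def)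
  have xb: "xb b \<in> Q b" "\<And>u. u \<in> V \<Longrightarrow> b \<in> T (Sx (x u)) \<Longrightarrow> x u \<le> xb b" if "b \<in> W" for b
  proof -
    have "finite (Q b)" using \<open>finite V\<close> by (simp add: Q_def)
    moreover have "x u0 \<in> Q b" using u0 \<open>Sx (x u0) = V\<close> full that unfolding Q_def by blast
    ultimately show "xb b \<in> Q b" unfolding xb_def by (intro Max_in) auto
    show "\<And>u. u \<in> V \<Longrightarrow> b \<in> T (Sx (x u)) \<Longrightarrow> x u \<le> xb b"
      unfolding xb_def using \<open>finite (Q b)\<close> by (intro Max_ge) (auto simp: Q_def)
  qed
  have "{b\<in>W. t \<le> xb b} = T (Sx t)" if "\<exists>u\<in>V. t \<le> x u" for t
  proof -
    define v where "v = Min {x u | u. u \<in> V \<and> t \<le> x u}"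
    have "v \<in> {x u | u. u \<in> V \<and> t \<le> x u}"
      unfolding v_def using that \<open>finite V\<close> by (intro Min_in) auto
    then obtain u1 where u1: "u1 \<in> V" "t \<le> x u1" "v = x u1" by auto
    have v_le: "v \<le> x u" if "u \<in> V" "t \<le> x u" for u
      unfolding v_def using that \<open>finite V\<close> by (intro Min_le) auto
    have Sx_t: "Sx t = Sx v" using v_le u1 by (force simp: Sx_def)
    show ?thesis
    proof (intro equalityI subsetI)
      fix b assume b: "b \<in> {b\<in>W. t \<le> xb b}"
      then obtain u where u: "u \<in> V" "b \<in> T (Sx (x u))" "xb b = x u"
        using xb(1) by (auto simp: Q_def)
      have "T (Sx (x u)) \<subseteq> T (Sx v)"
        using v_le[of u] u b by (intro mono) (auto simp: Sx_def)
      then show "b \<in> T (Sx t)" using u Sx_t by auto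
    next
      fix b assume "b \<in> T (Sx t)"
      then show "b \<in> {b\<in>W. t \<le> xb b}"
        using xb(2)[of b u1] u1 Sx_t range by fastforce
    qed
  qed
  moreover have "{b\<in>W. t \<le> xb b} = {}" if "\<not> (\<exists>u\<in>V. t \<le> x u)" for t
    using that xb(1) by (fastforce simp: Q_def)
  ultimately show ?thesis unfolding Sx_def by metis
qed

locale partial_minimization =
  fixes V Vb :: "'a set" and G :: "'a set \<Rightarrow> real"
  assumes finite_V: "finite V" and finite_Vb: "finite Vb" and disjoint: "V \<inter> Vb = {}"
    and nonneg: "\<And>S. S \<subseteq> V \<union> Vb \<Longrightarrow> 0 \<le> G S"
    and G_empty: "G {} = 0" and G_full: "G (V \<union> Vb) = 0"
begin

definition reduced :: "'a set \<Rightarrow> real" where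
  "reduced S = (MIN T\<in>Pow Vb. G (S \<union> T))"

definition minimizer :: "'a set \<Rightarrow> 'a set \<Rightarrow> bool" where
  "minimizer S T \<longleftrightarrow> T \<subseteq> Vb \<and> G (S \<union> T) = reduced S"

definition max_minimizer :: "'a set \<Rightarrow> 'a set" where
  "max_minimizer S = (SOME T. minimizer S T \<and> (\<forall>T'. minimizer S T' \<longrightarrow> card T' \<le> card T))"

lemma reduced_le: "T \<subseteq> Vb \<Longrightarrow> reduced S \<le> G (S \<union> T)"
  unfolding reduced_def using finite_Vb by (intro Min_le) auto

lemma minimizer_exists: "\<exists>T. minimizer S T"
proof -
  have "reduced S \<in> (\<lambda>T. G (S \<union> T)) ` Pow Vb"
    unfolding reduced_def using finite_Vb by (intro Min_in) auto
  then show ?thesis unfolding minimizer_def by auto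
qed

lemma reduced_empty: "reduced {} = 0"
proof (rule antisym)
  show "reduced {} \<le> 0" using reduced_le[of "{}" "{}"] G_empty by simp
  obtain T where "minimizer {} T" using minimizer_exists by blast
  then show "0 \<le> reduced {}" using nonneg[of T] by (auto simp: minimizer_def)
qed

lemma reduced_V: "reduced V = 0"
proof (rule antisym)
  show "reduced V \<le> 0" using reduced_le[of Vb V] G_full by simp
  obtain T where "minimizer V T" using minimizer_exists by blast
  then show "0 \<le> reduced V" using nonneg[of "V \<union> T"] by (auto simp: minimizer_def)
qed

lemma superlevel_extension:
  "{u\<in>V \<union> Vb. t \<le> (if u \<in> V then x u else xb u)} = {u\<in>V. t \<le> x u} \<union> {u\<in>Vb. t \<le> xb u}"
  using disjoint by auto

lemma lovasz_reduced_le: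
  "lovasz V reduced x \<le> lovasz (V \<union> Vb) G (\<lambda>u. if u \<in> V then x u else xb u)"
proof -
  have "reduced {u\<in>V. t \<le> x u} \<le> G {u\<in>V \<union> Vb. t \<le> (if u \<in> V then x u else xb u)}" for t
    unfolding superlevel_extension by (rule reduced_le) auto
  then show ?thesis
    using finite_V finite_Vb reduced_V reduced_empty G_full G_empty
    by (intro lovasz_le_lovasz_superlevel) auto
qed

lemma max_minimizer:
  shows max_minimizer_minimizer: "minimizer S (max_minimizer S)"
    and card_le_max_minimizer: "minimizer S T \<Longrightarrow> card T \<le> card (max_minimizer S)"
proof -
  define M where "M = {T. minimizer S T}"
  have "finite M" using finite_Vb by (auto simp: M_def minimizer_def)
  moreover have "M \<noteq> {}" using minimizer_exists by (auto simp: M_def)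
  ultimately have "Max (card ` M) \<in> card ` M" by (intro Max_in) auto
  then obtain T where "T \<in> M" "card T = Max (card ` M)" by auto
  then have "minimizer S T \<and> (\<forall>T'. minimizer S T' \<longrightarrow> card T' \<le> card T)"
    using \<open>finite M\<close> by (auto simp: M_def)
  then have "minimizer S (max_minimizer S) \<and>
      (\<forall>T'. minimizer S T' \<longrightarrow> card T' \<le> card (max_minimizer S))"
    unfolding max_minimizer_def by (rule someI)
  then show "minimizer S (max_minimizer S)"
    and "minimizer S T \<Longrightarrow> card T \<le> card (max_minimizer S)" for T
    by auto
qed

lemma max_minimizer_subset: "max_minimizer S \<subseteq> Vb"
  using max_minimizer_minimizer by (simp add: minimizer_def)

lemma max_minimizer_V: "max_minimizer V = Vb"
  using card_le_max_minimizer[of V Vb] max_minimizer_subset[of V] G_full reduced_V finite_Vb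
  by (simp add: minimizer_def card_seteq)

text \<open>Submodularity makes \<open>T \<union> T'\<close> a minimizer for the larger set whenever \<open>T\<close> and
  \<open>T'\<close> are minimizers for \<open>S \<subseteq> S'\<close>; maximality of \<open>T'\<close> then forces \<open>T \<subseteq> T'\<close>.\<close>

lemma max_minimizer_mono:
  assumes sub: "submodular_on (V \<union> Vb) G" and "S \<subseteq> S'" "S' \<subseteq> V"
  shows "max_minimizer S \<subseteq> max_minimizer S'"
proof -
  define T T' where "T = max_minimizer S" and "T' = max_minimizer S'"
  have T: "T \<subseteq> Vb" "G (S \<union> T) = reduced S" and T': "T' \<subseteq> Vb" "G (S' \<union> T') = reduced S'"
    using max_minimizer_minimizer unfolding minimizer_def T_def T'_def by auto
  have "G (S' \<union> (T \<union> T')) + G (S \<union> (T \<inter> T')) \<le> G (S \<union> T) + G (S' \<union> T')"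
  proof -
    have "S \<union> T \<subseteq> V \<union> Vb" "S' \<union> T' \<subseteq> V \<union> Vb" using assms(2,3) T T' by auto
    then have "G ((S \<union> T) \<union> (S' \<union> T')) + G ((S \<union> T) \<inter> (S' \<union> T')) \<le> G (S \<union> T) + G (S' \<union> T')"
      using sub unfolding submodular_on_def by blast
    moreover have "(S \<union> T) \<union> (S' \<union> T') = S' \<union> (T \<union> T')" "(S \<union> T) \<inter> (S' \<union> T') = S \<union> (T \<inter> T')"
      using assms(2,3) T T' disjoint by auto
    ultimately show ?thesis by simp
  qed
  moreover have "reduced S \<le> G (S \<union> (T \<inter> T'))" "reduced S' \<le> G (S' \<union> (T \<union> T'))"
    using T T' by (auto intro: reduced_le)
  ultimately have "minimizer S' (T \<union> T')" using T T' by (simp add: minimizer_def)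
  then have "card (T \<union> T') \<le> card T'" unfolding T'_def by (rule card_le_max_minimizer)
  then have "T' = T \<union> T'"
    using finite_Vb T T' by (intro card_seteq) (auto intro: finite_subset)
  then show ?thesis unfolding T_def T'_def by auto
qed

lemma lovasz_reduced_attained:
  assumes "submodular_on (V \<union> Vb) G"
  shows "\<exists>xb. lovasz (V \<union> Vb) G (\<lambda>u. if u \<in> V then x u else xb u) = lovasz V reduced x"
proof (cases "V = {}")
  case True
  have "G {u\<in>Vb. t \<le> 0} = reduced {u\<in>V. t \<le> x u}" for t
    using True G_full G_empty reduced_empty by (cases "t \<le> 0") auto
  then show ?thesis
    using True finite_Vb G_full G_empty reduced_empty
    by (intro exI[of _ "\<lambda>_. 0"] lovasz_eq_lovasz_superlevel) auto
next
  case False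
  obtain xb where xb: "\<And>t. {b\<in>Vb. t \<le> xb b} =
      (if \<exists>u\<in>V. t \<le> x u then max_minimizer {u\<in>V. t \<le> x u} else {})"
    using exists_superlevel_realization[where T = max_minimizer and W = Vb and x = x,
        OF finite_V False max_minimizer_mono[OF assms] max_minimizer_subset max_minimizer_V]
    by blast
  have "G {u\<in>V \<union> Vb. t \<le> (if u \<in> V then x u else xb u)} = reduced {u\<in>V. t \<le> x u}" for t
  proof (cases "\<exists>u\<in>V. t \<le> x u")
    case True
    then show ?thesis using max_minimizer_minimizer[of "{u\<in>V. t \<le> x u}"]
      unfolding superlevel_extension xb by (simp add: minimizer_def)
  next
    case False
    then have no_level: "{u\<in>V. t \<le> x u} = {}" by auto
    show ?thesis
      unfolding superlevel_extension xb no_level using False G_empty reduced_empty by simp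
  qed
  then show ?thesis
    using finite_V finite_Vb G_full G_empty reduced_empty reduced_V
    by (intro exI[of _ xb] lovasz_eq_lovasz_superlevel) auto
qed

end

theorem lemma4:
  fixes V Vb :: "'a set" and G :: "'a set \<Rightarrow> real" and F :: "'a set \<Rightarrow> real"
    and x :: "'a \<Rightarrow> real"
  assumes "finite V" and "finite Vb" and "V \<inter> Vb = {}"
    and "submodular_on (V \<union> Vb) G"
    and "\<And>S. S \<subseteq> V \<union> Vb \<Longrightarrow> G S \<ge> 0"
    and "G {} = 0" and "G (V \<union> Vb) = 0"
    and "\<And>S. F S = (MIN T\<in>Pow Vb. G (S \<union> T)) - (MIN T\<in>Pow Vb. G T)"
  shows "(\<exists>xb :: 'a \<Rightarrow> real.
            lovasz (V \<union> Vb) G (\<lambda>i. if i \<in> V then x i else xb i) = lovasz V F x)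
       \<and> (\<forall>xb :: 'a \<Rightarrow> real.
            lovasz V F x \<le> lovasz (V \<union> Vb) G (\<lambda>i. if i \<in> V then x i else xb i))"
proof -
  interpret partial_minimization V Vb G
    using assms(1-3,5-7) by unfold_locales auto
  have "(MIN T\<in>Pow Vb. G T) = reduced {}" by (simp add: reduced_def)
  then have "F = reduced" using assms(8) reduced_empty by (auto simp: reduced_def)
  then show ?thesis using lovasz_reduced_attained[OF assms(4)] lovasz_reduced_le by auto
qed

end
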